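(* Let $\{(\mathbf{x}^{(i)},y^{(i)})\}_{i=1}^n$ with $\|\mathbf{x}^{(i)}\|_2\le1$, $y^{(i)}\in\{-1,1\}$, and suppose there is $\mathbf{w}^*$ with $\|\mathbf{w}^*\|_2=1$ and $\min_iy^{(i)}\mathbf{x}^{(i)\top}\mathbf{w}^*=\gamma>0$. Let $A$ have rows $y^{(i)}\mathbf{x}^{(i)\top}$ and $R(\mathbf{v})=\frac1n\sum_{i=1}^n\exp(-y^{(i)}\mathbf{v}^{\top}\mathbf{x}^{(i)})$. (NAG.) $\mathbf{v}_0=\mathbf{s}_0=\mathbf{0}$; for $t=1,\dots,T$: $\mathbf{u}_t=\mathbf{s}_{t-1}+\frac{1}{2(t-1)}\mathbf{v}_{t-1}$ (with $\mathbf{u}_1=\mathbf{s}_0$), $\mathbf{v}_t=\mathbf{v}_{t-1}-\eta_t\nabla R(\mathbf{u}_t)$ with $\eta_t=\frac{t}{R(\mathbf{u}_t)}$, $\mathbf{s}_t=\mathbf{s}_{t-1}+\frac{1}{2(t+1)}\mathbf{v}_t$. (Game dynamics.) $\alpha_t=t$, $g(\mathbf{w},\mathbf{p})=\mathbf{p}^{\top}A\mathbf{w}-\frac12\|\mathbf{w}\|_2^2$, $\mathbf{w}_0=\mathbf{0}$, $h_j(\mathbf{w})=-g(\mathbf{w},\mathbf{p}_j)$, $\ell_j(\mathbf{p})=g(\mathbf{w}_j,\mathbf{p})$; for $t=1,\dots,T$, first $\mathbf{p}_t=\arg\min_{\mathbf{p}\in\Delta^n}\tfrac14\big[\sum_{s=1}^{t-1}\alpha_s\ell_s(\mathbf{p})+\alpha_t\ell_{t-1}(\mathbf{p})\big]+D_E(\mathbf{p},\tfrac{\mathbf{1}}{n})$,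 then $\mathbf{w}_t=\arg\min_{\mathbf{w}\in\mathbb{R}^d}\sum_{j=1}^t\alpha_jh_j(\mathbf{w})$; let $\overline{\mathbf{w}}_T=\frac{\sum_t\alpha_t\mathbf{w}_t}{\sum_t\alpha_t}$ and $\widetilde{\mathbf{w}}_T=\frac{\sum_{t=1}^T\alpha_t}{4}\overline{\mathbf{w}}_T$. Then $\mathbf{s}_T=\widetilde{\mathbf{w}}_T$, and $\frac{\min_{\mathbf{p}\in\Delta^n}\mathbf{p}^{\top}A\mathbf{s}_T}{\|\mathbf{s}_T\|_2}\ge\gamma-\frac{8\log n+2}{T(T+1)\gamma}$.
   Context: $\Delta^n$ is the probability simplex; $\mathbf{1}$ the all-ones vector; $D_E(\mathbf{p},\mathbf{q})=\sum_ip_i\log(p_i/q_i)$ (KL divergence). Note $\min_{\mathbf{p}\in\Delta^n}\mathbf{p}^{\top}A\mathbf{s}=\min_iy^{(i)}\mathbf{x}^{(i)\top}\mathbf{s}$. *)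

theory Defs
  imports "HOL-Analysis.Analysis"
begin

definition prob_simplex :: "(real^'n::finite) set" where
  "prob_simplex = {p. (\<forall>i. 0 \<le> p$i) \<and> (\<Sum>i\<in>UNIV. p$i) = 1}"

text \<open>KL divergence D_E(p,q) = sum_i p_i log(p_i/q_i) (terms with p_i = 0 vanish).\<close>
definition KL :: "real^'n::finite \<Rightarrow> real^'n \<Rightarrow> real" where
  "KL p q = (\<Sum>i\<in>UNIV. p$i * ln (p$i / q$i))"

definition risk :: "('n::finite \<Rightarrow> real^'d) \<Rightarrow> ('n \<Rightarrow> real) \<Rightarrow> real^'d \<Rightarrow> real" where
  "risk x y v = (1 / real CARD('n)) * (\<Sum>i\<in>UNIV. exp (- (y i * (v \<bullet> x i))))"

text \<open>p^T A w, where A has rows y_i x_i^T.\<close>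
definition pAw :: "('n::finite \<Rightarrow> real^'d) \<Rightarrow> ('n \<Rightarrow> real) \<Rightarrow> real^'n \<Rightarrow> real^'d \<Rightarrow> real" where
  "pAw x y p w = (\<Sum>i\<in>UNIV. p$i * (y i * (x i \<bullet> w)))"

definition gfun :: "('n::finite \<Rightarrow> real^'d) \<Rightarrow> ('n \<Rightarrow> real) \<Rightarrow> real^'d \<Rightarrow> real^'n \<Rightarrow> real" where
  "gfun x y w p = pAw x y p w - 1/2 * (norm w)^2"

end

theory Submission
  imports Defs "HOL-Probability.Hoeffding"
begin

(*
  The game iterates are explicit.  The w-player's best response to p_1, ..., p_t is the
  weighted average w_t = 2/(t(t+1)) sum_j j A^T p_j, and the p-player's entropy-regularised
  step is the Gibbs distribution of the margins at a point u, whose image under A^T is exactly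
  the normalised negative gradient -grad R(u) / R(u).  Induction on t then identifies
  v_t = sum_j j A^T p_j, s_t = 1/4 sum_j j w_j and u_t = s_(t-1) + t/4 w_(t-1).

  For the margin bound let L(z) = ln sum_i exp(-y_i x_i.z).  It is convex, it is 1-smooth by
  Hoeffding's lemma, and -L(z) is a lower bound for every p^T A z.  Smoothness at u_t towards
  s_t and convexity at u_t towards s_(t-1) show that the potential
  L(s_t) + t(t+1)/16 |w_t|^2 + 1/8 sum_(j<=t) j |w_j|^2 can increase only in the first step,
  and then by at most 1/32.  Every w_t has margin at least gamma along w*, so |w_t| >= gamma
  and |s_T| >= T(T+1) gamma / 8; with AM-GM the potential bound becomes
  min_p p^T A s_T >= gamma |s_T| - ln n - 1/32, and dividing by |s_T| gives the claim
  (with 1/4 in place of the constant 2).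
*)

(* Stated with Suc 0: the simplifier rewrites the lower bound 1 of a nat interval to Suc 0. *)
lemma gauss_sum_from_Suc_0_real:
  "(\<Sum>j = Suc 0..t. real j) = real t * (real t + 1) / 2"
  using double_gauss_sum_from_Suc_0[where 'a = real, of t] by simp

lemma exp_expectation_le:
  fixes \<pi> c :: "'a \<Rightarrow> real"
  assumes "finite A" "\<And>i. i \<in> A \<Longrightarrow> 0 \<le> \<pi> i" "sum \<pi> A = 1"
  shows "exp (\<Sum>i\<in>A. \<pi> i * c i) \<le> (\<Sum>i\<in>A. \<pi> i * exp (c i))"
proof -
  have "A \<noteq> {}"
    using assms(3) by auto
  then show ?thesis
    using convex_on_sum[OF assms(1) _ exp_convex] assms by auto
qed

lemma expectation_le_ln_sum_exp:
  fixes \<pi> c :: "'a \<Rightarrow> real"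
  assumes "finite A" "\<And>i. i \<in> A \<Longrightarrow> 0 \<le> \<pi> i" "sum \<pi> A = 1"
  shows "(\<Sum>i\<in>A. \<pi> i * c i) \<le> ln (\<Sum>i\<in>A. \<pi> i * exp (c i))"
  using exp_expectation_le[OF assms, of c] by (metis exp_gt_zero ln_ge_iff order_less_le_trans)

lemma exp_le_chord:
  fixes c r :: real
  assumes "0 < r" "\<bar>c\<bar> \<le> r"
  shows "exp c \<le> exp (-r) + (c + r) * ((exp r - exp (-r)) / (2 * r))"
proof -
  define \<theta> where "\<theta> = (c + r) / (2 * r)"
  have "0 \<le> \<theta>" "\<theta> \<le> 1"
    using assms by (auto simp: \<theta>_def field_simps)
  moreover have "c = (1 - \<theta>) * -r + \<theta> * r"
    using assms(1) by (simp add: \<theta>_def field_simps)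
  moreover have "(1 - \<theta>) * exp (-r) + \<theta> * exp r = exp (-r) + (c + r) * ((exp r - exp (-r)) / (2 * r))"
    using assms(1) by (simp add: \<theta>_def field_simps)
  ultimately show ?thesis
    using convex_onD[OF exp_convex, of \<theta> "-r" r] by simp
qed

lemma sum_exp_le_two_point:
  fixes \<pi> c :: "'a \<Rightarrow> real"
  assumes "finite A" "\<And>i. i \<in> A \<Longrightarrow> 0 \<le> \<pi> i" "sum \<pi> A = 1"
    and "0 < r" "\<And>i. i \<in> A \<Longrightarrow> \<bar>c i\<bar> \<le> r"
  shows "(\<Sum>i\<in>A. \<pi> i * exp (c i))
           \<le> exp (-r) * (1 + ((\<Sum>i\<in>A. \<pi> i * c i) + r) / (2 * r) * (exp (2 * r) - 1))"
proof -
  define k where "k = (exp r - exp (-r)) / (2 * r)"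
  have "(\<Sum>i\<in>A. \<pi> i * exp (c i)) \<le> (\<Sum>i\<in>A. \<pi> i * (exp (-r) + (c i + r) * k))"
    using exp_le_chord[OF assms(4,5)] assms(2) by (intro sum_mono mult_left_mono) (auto simp: k_def)
  also have "\<dots> = (\<Sum>i\<in>A. \<pi> i * exp (-r) + \<pi> i * c i * k + \<pi> i * (r * k))"
    by (simp add: algebra_simps)
  also have "\<dots> = exp (-r) + (\<Sum>i\<in>A. \<pi> i * c i) * k + r * k"
    by (simp only: sum.distrib assms(3) mult_1_left flip: sum_distrib_right)
  also have "\<dots> = exp (-r) * (1 + ((\<Sum>i\<in>A. \<pi> i * c i) + r) / (2 * r) * (exp (2 * r) - 1))"
    using assms(4) by (simp add: k_def field_simps flip: exp_add)
  finally show ?thesis .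
qed

lemma Hoeffdings_lemma_finite:
  fixes \<pi> c :: "'a \<Rightarrow> real"
  assumes "finite A" "\<And>i. i \<in> A \<Longrightarrow> 0 \<le> \<pi> i" "sum \<pi> A = 1"
    and bound: "\<And>i. i \<in> A \<Longrightarrow> \<bar>c i\<bar> \<le> r"
  shows "ln (\<Sum>i\<in>A. \<pi> i * exp (c i)) \<le> (\<Sum>i\<in>A. \<pi> i * c i) + r\<^sup>2 / 2"
proof (cases "r = 0")
  case True
  then show ?thesis
    using bound assms(3) by simp
next
  case False
  obtain i0 where "i0 \<in> A"
    using assms(3) by fastforce
  then have "0 < r"
    using bound[of i0] False by linarith
  define \<mu> where "\<mu> = (\<Sum>i\<in>A. \<pi> i * c i)"
  define P where "P = (\<mu> + r) / (2 * r)"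
  have "\<bar>\<mu>\<bar> \<le> r"
    using convex_sum_bound_le[of A \<pi> c 0 r] assms by (simp add: \<mu>_def mult.commute)
  then have "0 \<le> P" "0 \<le> P * (exp (2 * r) - 1)"
    using \<open>0 < r\<close> by (simp_all add: P_def)
  have "0 < (\<Sum>i\<in>A. \<pi> i * exp (c i))"
    using exp_expectation_le[OF assms(1-3), of c] exp_gt_zero order_less_le_trans by blast
  then have "ln (\<Sum>i\<in>A. \<pi> i * exp (c i)) \<le> ln (exp (-r) * (1 + P * (exp (2 * r) - 1)))"
    using sum_exp_le_two_point[where c = c, OF assms(1-3) \<open>0 < r\<close> bound] by (simp add: P_def \<mu>_def)
  also have "\<dots> = -r + ln (1 + P * (exp (2 * r) - 1))"
    using \<open>0 \<le> P * (exp (2 * r) - 1)\<close> by (simp add: ln_mult add_pos_nonneg)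
  also have "\<dots> \<le> -r + 2 * r * P + (2 * r)\<^sup>2 / 8"
    using Hoeffdings_lemma_aux[of "2 * r" P] \<open>0 < r\<close> \<open>0 \<le> P\<close> by simp
  also have "\<dots> = \<mu> + r\<^sup>2 / 2"
    using \<open>0 < r\<close> by (simp add: P_def power2_eq_square field_simps)
  finally show ?thesis
    by (simp add: \<mu>_def)
qed

lemma kl_summand_eq:
  fixes a b :: real
  assumes "0 < a" "0 < b"
  shows "a * ln (a / b) - a + b = a * ((b / a - 1) - ln (b / a))"
proof -
  have "a * (b / a - 1) = b - a"
    using assms by (simp add: field_simps)
  moreover have "ln (b / a) = - ln (a / b)"
    using assms by (simp add: ln_div)
  ultimately show ?thesis
    by (simp add: algebra_simps)
qed

lemma kl_summand_nonneg:
  fixes a b :: real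
  assumes "0 \<le> a" "0 < b"
  shows "0 \<le> a * ln (a / b) - a + b"
proof (cases "a = 0")
  case False
  with assms have "0 < a" by simp
  then show ?thesis
    using kl_summand_eq[OF _ \<open>0 < b\<close>] ln_le_minus_one[of "b / a"] \<open>0 < b\<close> by simp
qed (use assms in simp)

lemma kl_summand_eq_0_imp_eq:
  fixes a b :: real
  assumes "0 \<le> a" "0 < b" "a * ln (a / b) - a + b = 0"
  shows "a = b"
proof -
  have "0 < a"
    using assms by (cases "a = 0") auto
  then have "ln (b / a) = b / a - 1"
    using assms kl_summand_eq by simp
  then show ?thesis
    using ln_eq_minus_one[of "b / a"] \<open>0 < a\<close> \<open>0 < b\<close> by simp
qed

lemma KL_nonpos_imp_eq:
  fixes p q :: "real^'n::finite"
  assumes "p \<in> prob_simplex" "q \<in> prob_simplex" "\<And>i. 0 < q $ i" "KL p q \<le> 0"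
  shows "p = q"
proof -
  define d where "d i = p $ i * ln (p $ i / q $ i) - p $ i + q $ i" for i
  have d_nonneg: "0 \<le> d i" for i
    using assms(1,3) kl_summand_nonneg by (simp add: d_def prob_simplex_def)
  have "sum d UNIV = KL p q"
    using assms(1,2) by (simp add: d_def KL_def prob_simplex_def sum.distrib sum_subtractf)
  moreover have "0 \<le> sum d UNIV"
    by (simp add: sum_nonneg d_nonneg)
  ultimately have "sum d UNIV = 0"
    using assms(4) by linarith
  then have "d i = 0" for i
    using d_nonneg by (simp add: sum_nonneg_eq_0_iff)
  then show ?thesis
    using assms(1,3) kl_summand_eq_0_imp_eq by (simp add: d_def prob_simplex_def vec_eq_iff)
qed

definition Atrans :: "('n::finite \<Rightarrow> real^'d) \<Rightarrow> ('n \<Rightarrow> real) \<Rightarrow> real^'n \<Rightarrow> real^'d" where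
  "Atrans x y q = (\<Sum>i\<in>UNIV. (q $ i * y i) *\<^sub>R x i)"

definition partition_fun :: "('n::finite \<Rightarrow> real^'d) \<Rightarrow> ('n \<Rightarrow> real) \<Rightarrow> real^'d \<Rightarrow> real" where
  "partition_fun x y z = (\<Sum>i\<in>UNIV. exp (- (y i * (x i \<bullet> z))))"

definition log_partition :: "('n::finite \<Rightarrow> real^'d) \<Rightarrow> ('n \<Rightarrow> real) \<Rightarrow> real^'d \<Rightarrow> real" where
  "log_partition x y z = ln (partition_fun x y z)"

definition gibbs_dist :: "('n::finite \<Rightarrow> real^'d) \<Rightarrow> ('n \<Rightarrow> real) \<Rightarrow> real^'d \<Rightarrow> real^'n" where
  "gibbs_dist x y z = (\<chi> i. exp (- (y i * (x i \<bullet> z))) / partition_fun x y z)"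

lemma pAw_eq_inner_Atrans: "pAw x y q z = Atrans x y q \<bullet> z"
  by (simp add: pAw_def Atrans_def inner_sum_left mult.assoc)

lemma partition_fun_pos: "0 < partition_fun x y z"
  unfolding partition_fun_def by (intro sum_pos) auto

lemma gibbs_dist_pos: "0 < gibbs_dist x y z $ i"
  using partition_fun_pos[of x y z] by (simp add: gibbs_dist_def)

lemma gibbs_dist_in_simplex: "gibbs_dist x y z \<in> prob_simplex"
  using partition_fun_pos[of x y z] gibbs_dist_pos[of x y z]
  by (simp add: prob_simplex_def gibbs_dist_def less_imp_le flip: sum_divide_distrib partition_fun_def)

lemma log_partition_zero: "log_partition x y 0 = ln (real CARD('n))"
  for x :: "'n::finite \<Rightarrow> real^'d"
  by (simp add: log_partition_def partition_fun_def)

lemma log_partition_add: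
  "log_partition x y (z + d)
     = log_partition x y z + ln (\<Sum>i\<in>UNIV. gibbs_dist x y z $ i * exp (- (y i * (x i \<bullet> d))))"
proof -
  have "partition_fun x y (z + d)
      = partition_fun x y z * (\<Sum>i\<in>UNIV. gibbs_dist x y z $ i * exp (- (y i * (x i \<bullet> d))))"
    using partition_fun_pos[of x y z]
    by (simp add: partition_fun_def gibbs_dist_def sum_distrib_left inner_add_right
        distrib_left flip: exp_add)
  moreover have "0 < (\<Sum>i\<in>UNIV. gibbs_dist x y z $ i * exp (- (y i * (x i \<bullet> d))))"
    by (intro sum_pos mult_pos_pos gibbs_dist_pos exp_gt_zero) auto
  ultimately show ?thesis
    using partition_fun_pos[of x y z] by (simp add: log_partition_def ln_mult)
qed

lemma log_partition_tangent_le: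
  "log_partition x y z - Atrans x y (gibbs_dist x y z) \<bullet> d \<le> log_partition x y (z + d)"
proof -
  have "(\<Sum>i\<in>UNIV. gibbs_dist x y z $ i * - (y i * (x i \<bullet> d)))
          \<le> ln (\<Sum>i\<in>UNIV. gibbs_dist x y z $ i * exp (- (y i * (x i \<bullet> d))))"
    using gibbs_dist_in_simplex[of x y z]
    by (intro expectation_le_ln_sum_exp) (auto simp: prob_simplex_def)
  then show ?thesis
    by (simp add: log_partition_add sum_negf pAw_eq_inner_Atrans[unfolded pAw_def])
qed

lemma log_partition_le_tangent_quadratic:
  assumes "\<forall>i. norm (x i) \<le> 1" "\<forall>i. y i \<in> {-1, 1}"
  shows "log_partition x y (z + d)
           \<le> log_partition x y z - Atrans x y (gibbs_dist x y z) \<bullet> d + (norm d)\<^sup>2 / 2"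
proof -
  have "\<bar>- (y i * (x i \<bullet> d))\<bar> \<le> norm d" for i
  proof -
    have "y i \<in> {-1, 1}"
      using assms(2) by blast
    then have "\<bar>y i\<bar> = 1"
      by auto
    moreover have "\<bar>x i \<bullet> d\<bar> \<le> norm d"
      using Cauchy_Schwarz_ineq2[of "x i" d] assms(1) mult_right_le_one_le[of "norm d" "norm (x i)"]
      by (simp add: mult.commute)
    ultimately show ?thesis
      by (simp add: abs_mult)
  qed
  then have "ln (\<Sum>i\<in>UNIV. gibbs_dist x y z $ i * exp (- (y i * (x i \<bullet> d))))
          \<le> (\<Sum>i\<in>UNIV. gibbs_dist x y z $ i * - (y i * (x i \<bullet> d))) + (norm d)\<^sup>2 / 2"
    using gibbs_dist_in_simplex[of x y z]
    by (intro Hoeffdings_lemma_finite) (auto simp: prob_simplex_def)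
  then show ?thesis
    by (simp add: log_partition_add sum_negf pAw_eq_inner_Atrans[unfolded pAw_def])
qed

lemma neg_log_partition_le_pAw:
  assumes "q \<in> prob_simplex"
  shows "- log_partition x y z \<le> pAw x y q z"
proof -
  have "- log_partition x y z \<le> y i * (x i \<bullet> z)" for i
  proof -
    have "exp (- (y i * (x i \<bullet> z))) \<le> partition_fun x y z"
      unfolding partition_fun_def by (rule member_le_sum) auto
    then have "ln (exp (- (y i * (x i \<bullet> z)))) \<le> log_partition x y z"
      unfolding log_partition_def by (rule ln_mono) simp
    then show ?thesis
      by simp
  qed
  then have "(\<Sum>i\<in>UNIV. q $ i * - log_partition x y z) \<le> pAw x y q z"
    using assms unfolding pAw_def prob_simplex_def by (intro sum_mono mult_left_mono) auto
  then show ?thesis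
    using assms by (simp add: prob_simplex_def sum_negf flip: sum_distrib_right)
qed

lemma pAw_add_KL_uniform:
  fixes x :: "'n::finite \<Rightarrow> real^'d"
  assumes "q \<in> prob_simplex"
  shows "pAw x y q z + KL q (\<chi> i. 1 / real CARD('n))
           = KL q (gibbs_dist x y z) + ln (real CARD('n)) - log_partition x y z"
proof -
  have summand: "q $ i * (y i * (x i \<bullet> z)) + q $ i * ln (q $ i / (1 / real CARD('n)))
      = q $ i * ln (q $ i / gibbs_dist x y z $ i) + q $ i * (ln (real CARD('n)) - log_partition x y z)"
    for i
  proof (cases "q $ i = 0")
    case False
    then have "0 < q $ i"
      using assms by (simp add: prob_simplex_def less_le)
    then show ?thesis
      using partition_fun_pos[of x y z]
      by (simp add: gibbs_dist_def log_partition_def ln_div ln_mult algebra_simps)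
  qed simp
  have "pAw x y q z + KL q (\<chi> i. 1 / real CARD('n))
      = (\<Sum>i\<in>UNIV. q $ i * (y i * (x i \<bullet> z)) + q $ i * ln (q $ i / (1 / real CARD('n))))"
    by (simp only: pAw_def KL_def sum.distrib vec_lambda_beta)
  also have "\<dots> = (\<Sum>i\<in>UNIV. q $ i * ln (q $ i / gibbs_dist x y z $ i)
                   + q $ i * (ln (real CARD('n)) - log_partition x y z))"
    by (rule sum.cong[OF refl summand])
  also have "\<dots> = KL q (gibbs_dist x y z) + ln (real CARD('n)) - log_partition x y z"
    using assms by (simp add: KL_def prob_simplex_def sum.distrib flip: sum_distrib_right)
  finally show ?thesis .
qed

lemma is_arg_min_gibbs_dist:
  fixes x :: "'n::finite \<Rightarrow> real^'d"
  assumes "is_arg_min (\<lambda>q. pAw x y q z + c + KL q (\<chi> i. 1 / real CARD('n))) (\<lambda>q. q \<in> prob_simplex) p"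
  shows "p = gibbs_dist x y z"
proof (rule KL_nonpos_imp_eq)
  show p: "p \<in> prob_simplex"
    using assms by (simp add: is_arg_min_def)
  show \<pi>: "gibbs_dist x y z \<in> prob_simplex" "\<And>i. 0 < gibbs_dist x y z $ i"
    by (rule gibbs_dist_in_simplex gibbs_dist_pos)+
  have "pAw x y p z + c + KL p (\<chi> i. 1 / real CARD('n))
      \<le> pAw x y (gibbs_dist x y z) z + c + KL (gibbs_dist x y z) (\<chi> i. 1 / real CARD('n))"
    using assms \<pi>(1) unfolding is_arg_min_def by (meson not_less)
  moreover have "KL (gibbs_dist x y z) (gibbs_dist x y z) = 0"
    by (auto simp: KL_def intro!: sum.neutral)
  ultimately show "KL p (gibbs_dist x y z) \<le> 0"
    using pAw_add_KL_uniform[OF p, of x y z] pAw_add_KL_uniform[OF \<pi>(1), of x y z] by simp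
qed

lemma risk_eq_partition_fun: "risk x y z = partition_fun x y z / real CARD('n)"
  for x :: "'n::finite \<Rightarrow> real^'d"
  by (simp add: risk_def partition_fun_def inner_commute)

lemma risk_has_derivative:
  fixes x :: "'n::finite \<Rightarrow> real^'d"
  shows "(risk x y has_derivative
           (\<lambda>h. h \<bullet> (- (partition_fun x y z / real CARD('n)) *\<^sub>R Atrans x y (gibbs_dist x y z)))) (at z)"
proof -
  have "(risk x y has_derivative
         (\<lambda>h. (\<Sum>i\<in>UNIV. - (y i * (x i \<bullet> h) * exp (- (y i * (x i \<bullet> z))))) / real CARD('n))) (at z)"
    unfolding risk_eq_partition_fun[abs_def] partition_fun_def by (auto intro!: derivative_eq_intros)
  moreover have "h \<bullet> (- (partition_fun x y z / real CARD('n)) *\<^sub>R Atrans x y (gibbs_dist x y z))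
      = (\<Sum>i\<in>UNIV. - (y i * (x i \<bullet> h) * exp (- (y i * (x i \<bullet> z))))) / real CARD('n)" for h
  proof -
    have "Atrans x y (gibbs_dist x y z) \<bullet> h = (\<Sum>i\<in>UNIV. gibbs_dist x y z $ i * (y i * (x i \<bullet> h)))"
      by (rule pAw_eq_inner_Atrans[unfolded pAw_def, symmetric])
    then show ?thesis
      using partition_fun_pos[of x y z]
      by (simp add: inner_commute[of h] gibbs_dist_def sum_negf sum_divide_distrib sum_distrib_left
          algebra_simps)
  qed
  ultimately show ?thesis
    by simp
qed

lemma risk_gradient_eq:
  fixes x :: "'n::finite \<Rightarrow> real^'d"
  assumes "GDERIV (risk x y) z :> G"
  shows "G = - (partition_fun x y z / real CARD('n)) *\<^sub>R Atrans x y (gibbs_dist x y z)"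
  using has_derivative_unique[OF assms[unfolded gderiv_def] risk_has_derivative]
  by (metis vector_eq_ldot)

lemma normalized_risk_gradient:
  fixes x :: "'n::finite \<Rightarrow> real^'d"
  assumes "GDERIV (risk x y) z :> G"
  shows "(c / risk x y z) *\<^sub>R G = - c *\<^sub>R Atrans x y (gibbs_dist x y z)"
  using partition_fun_pos[of x y z]
  by (simp add: risk_gradient_eq[OF assms] risk_eq_partition_fun)

lemma is_arg_min_quadratic:
  fixes V w :: "'a::real_inner"
  assumes "0 < S" "is_arg_min (\<lambda>z. S / 2 * (norm z)\<^sup>2 - V \<bullet> z) (\<lambda>_. True) w"
  shows "w = (1 / S) *\<^sub>R V"
proof -
  define c where "c = (1 / S) *\<^sub>R V"
  have V: "V = S *\<^sub>R c"
    using assms(1) by (simp add: c_def)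
  have "S / 2 * (norm w)\<^sup>2 - V \<bullet> w \<le> S / 2 * (norm c)\<^sup>2 - V \<bullet> c"
    using assms(2) unfolding is_arg_min_def by (meson not_less)
  moreover have "S / 2 * (norm w)\<^sup>2 - V \<bullet> w = S / 2 * (norm (w - c))\<^sup>2 + (S / 2 * (norm c)\<^sup>2 - V \<bullet> c)"
    by (simp add: V power2_norm_eq_inner inner_diff_left inner_diff_right inner_commute algebra_simps)
  ultimately have "S / 2 * (norm (w - c))\<^sup>2 \<le> 0"
    by linarith
  then show ?thesis
    using assms(1) by (simp add: c_def mult_le_0_iff)
qed

lemma weighted_sum_gfun:
  "(\<Sum>j\<in>J. a j * gfun x y (z j) q)
     = pAw x y q (\<Sum>j\<in>J. a j *\<^sub>R z j) - (\<Sum>j\<in>J. a j * (norm (z j))\<^sup>2) / 2"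
  by (simp add: gfun_def pAw_eq_inner_Atrans inner_sum_right right_diff_distrib sum_subtractf
      sum_divide_distrib)

lemma weighted_sum_neg_gfun:
  "(\<Sum>j\<in>J. a j * - gfun x y z (q j))
     = sum a J / 2 * (norm z)\<^sup>2 - (\<Sum>j\<in>J. a j *\<^sub>R Atrans x y (q j)) \<bullet> z"
proof -
  have "a j * - gfun x y z (q j) = a j / 2 * (norm z)\<^sup>2 - (a j *\<^sub>R Atrans x y (q j)) \<bullet> z" for j
    by (simp add: gfun_def pAw_eq_inner_Atrans algebra_simps)
  then show ?thesis
    by (simp add: sum_subtractf inner_sum_left flip: sum_distrib_right sum_divide_distrib)
qed

lemma norm_Atrans_le_1:
  assumes "q \<in> prob_simplex" "\<forall>i. norm (x i) \<le> 1" "\<forall>i. y i \<in> {-1, 1}"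
  shows "norm (Atrans x y q) \<le> 1"
proof -
  have summand: "norm ((q $ i * y i) *\<^sub>R x i) \<le> q $ i" for i
  proof -
    have "y i \<in> {-1, 1}"
      using assms(3) by blast
    then have "norm ((q $ i * y i) *\<^sub>R x i) = q $ i * norm (x i)"
      using assms(1) by (auto simp: prob_simplex_def)
    also have "\<dots> \<le> q $ i"
      using assms(1,2) by (simp add: prob_simplex_def mult_left_le)
    finally show ?thesis .
  qed
  have "norm (Atrans x y q) \<le> (\<Sum>i\<in>UNIV. norm ((q $ i * y i) *\<^sub>R x i))"
    unfolding Atrans_def by (rule norm_sum)
  also have "\<dots> \<le> (\<Sum>i\<in>UNIV. q $ i)"
    by (rule sum_mono) (rule summand)
  also have "\<dots> = 1"
    using assms(1) by (simp add: prob_simplex_def)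
  finally show ?thesis .
qed

lemma margin_le_inner_Atrans:
  assumes "q \<in> prob_simplex" "\<forall>i. \<gamma> \<le> y i * (x i \<bullet> w)"
  shows "\<gamma> \<le> Atrans x y q \<bullet> w"
proof -
  have "(\<Sum>i\<in>UNIV. q $ i * \<gamma>) \<le> pAw x y q w"
    using assms unfolding pAw_def prob_simplex_def by (intro sum_mono mult_left_mono) auto
  then show ?thesis
    using assms(1) by (simp add: pAw_eq_inner_Atrans prob_simplex_def flip: sum_distrib_right)
qed

lemma potential_increment_identity:
  fixes w w' :: "'a::real_inner" and t :: real
  shows "- (((t * (t + 1) / 2) *\<^sub>R w - ((t - 1) * t / 2) *\<^sub>R w') \<bullet> w) / 4
           + (norm ((t / 4) *\<^sub>R (w - w')))\<^sup>2 / 2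
           + (t * (t + 1) / 2 + t) * (norm w)\<^sup>2 / 8 - (t - 1) * t / 2 * (norm w')\<^sup>2 / 8
         = t * (2 - t) / 32 * (norm (w - w'))\<^sup>2"
proof -
  define A B C where "A = w \<bullet> w" and "B = w' \<bullet> w" and "C = w' \<bullet> w'"
  have diff: "(norm (w - w'))\<^sup>2 = A - 2 * B + C"
    by (simp add: A_def B_def C_def power2_norm_eq_inner inner_diff_left inner_diff_right inner_commute)
  have scaled: "(norm ((t / 4) *\<^sub>R (w - w')))\<^sup>2 = t\<^sup>2 / 16 * (norm (w - w'))\<^sup>2"
    by (simp add: power_mult_distrib power_divide)
  have "(norm w)\<^sup>2 = A" "(norm w')\<^sup>2 = C"
    "((t * (t + 1) / 2) *\<^sub>R w - ((t - 1) * t / 2) *\<^sub>R w') \<bullet> w = t * (t + 1) / 2 * A - (t - 1) * t / 2 * B"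
    by (simp_all add: A_def B_def C_def power2_norm_eq_inner inner_diff_left)
  then show ?thesis
    unfolding scaled diff by (simp add: field_simps power2_eq_square)
qed

locale nag_game =
  fixes x :: "'n::finite \<Rightarrow> real^'d" and y :: "'n \<Rightarrow> real" and T :: nat
    and v s u G :: "nat \<Rightarrow> real^'d"
    and p :: "nat \<Rightarrow> real^'n" and w :: "nat \<Rightarrow> real^'d"
  assumes x_norm: "\<forall>i. norm (x i) \<le> 1"
    and y_sign: "\<forall>i. y i \<in> {-1, 1}"
    and v0: "v 0 = 0" and s0: "s 0 = 0"
    and u1: "u 1 = s 0"
    and u_step: "\<forall>t. 2 \<le> t \<and> t \<le> T \<longrightarrow> u t = s (t - 1) + (1 / (2 * real (t - 1))) *\<^sub>R v (t - 1)"
    and G_grad: "\<forall>t. 1 \<le> t \<and> t \<le> T \<longrightarrow> GDERIV (risk x y) (u t) :> G t"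
    and v_step: "\<forall>t. 1 \<le> t \<and> t \<le> T \<longrightarrow> v t = v (t - 1) - (real t / risk x y (u t)) *\<^sub>R G t"
    and s_step: "\<forall>t. 1 \<le> t \<and> t \<le> T \<longrightarrow> s t = s (t - 1) + (1 / (2 * real (t + 1))) *\<^sub>R v t"
    and w0: "w 0 = 0"
    and p_step: "\<forall>t. 1 \<le> t \<and> t \<le> T \<longrightarrow>
      is_arg_min (\<lambda>q. 1/4 * ((\<Sum>j=1..t-1. real j * gfun x y (w j) q) + real t * gfun x y (w (t - 1)) q)
                      + KL q (\<chi> i. 1 / real CARD('n)))
                 (\<lambda>q. q \<in> prob_simplex) (p t)"
    and w_step: "\<forall>t. 1 \<le> t \<and> t \<le> T \<longrightarrow>
      is_arg_min (\<lambda>z. \<Sum>j=1..t. real j * (- gfun x y z (p j))) (\<lambda>z. True) (w t)"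
begin

definition dual_sum :: "nat \<Rightarrow> real^'d" where
  "dual_sum t = (\<Sum>j=1..t. real j *\<^sub>R Atrans x y (p j))"

lemma p_in_simplex: "1 \<le> t \<Longrightarrow> t \<le> T \<Longrightarrow> p t \<in> prob_simplex"
  using p_step by (simp add: is_arg_min_def)

lemma scaled_w_eq_dual_sum:
  assumes "t \<le> T"
  shows "(real t * (real t + 1) / 2) *\<^sub>R w t = dual_sum t"
proof (cases "t = 0")
  case False
  have "0 < (\<Sum>j=1..t. real j)"
    using False by (simp add: gauss_sum_from_Suc_0_real)
  moreover have "is_arg_min (\<lambda>z. (\<Sum>j=1..t. real j) / 2 * (norm z)\<^sup>2 - dual_sum t \<bullet> z) (\<lambda>_. True) (w t)"
    using w_step assms False unfolding weighted_sum_neg_gfun dual_sum_def by simp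
  ultimately have "w t = (1 / (\<Sum>j=1..t. real j)) *\<^sub>R dual_sum t"
    by (rule is_arg_min_quadratic)
  then show ?thesis
    using False by (simp add: gauss_sum_from_Suc_0_real)
qed (simp add: w0 dual_sum_def)

lemma u_Suc_eq_given_v:
  assumes "Suc k \<le> T" "v k = dual_sum k"
  shows "u (Suc k) = s k + (real (Suc k) / 4) *\<^sub>R w k"
proof (cases "k = 0")
  case False
  then have "u (Suc k) = s k + (1 / (2 * real k)) *\<^sub>R dual_sum k"
    using u_step assms by simp
  also have "dual_sum k = (real k * (real k + 1) / 2) *\<^sub>R w k"
    using scaled_w_eq_dual_sum assms(1) by simp
  finally show ?thesis
    using False by (simp add: field_simps)
qed (simp add: u1[unfolded One_nat_def] w0)

lemma p_Suc_eq_gibbs_dist_given_u: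
  assumes "Suc k \<le> T"
    and u: "u (Suc k) = (1/4) *\<^sub>R (\<Sum>j=1..k. real j *\<^sub>R w j) + (real (Suc k) / 4) *\<^sub>R w k"
  shows "p (Suc k) = gibbs_dist x y (u (Suc k))"
proof (rule is_arg_min_gibbs_dist)
  define c where "c = - ((\<Sum>j=1..k. real j * (norm (w j))\<^sup>2) / 2 + real (Suc k) * (norm (w k))\<^sup>2 / 2) / 4"
  have objective: "1/4 * ((\<Sum>j=1..k. real j * gfun x y (w j) q) + real (Suc k) * gfun x y (w k) q)
          = pAw x y q (u (Suc k)) + c" for q
    unfolding weighted_sum_gfun by (simp add: u c_def gfun_def pAw_eq_inner_Atrans inner_add_right field_simps)
  have "is_arg_min (\<lambda>q. 1/4 * ((\<Sum>j=1..k. real j * gfun x y (w j) q) + real (Suc k) * gfun x y (w k) q)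
                        + KL q (\<chi> i. 1 / real CARD('n))) (\<lambda>q. q \<in> prob_simplex) (p (Suc k))"
    using p_step[rule_format, of "Suc k"] assms(1) by simp
  then show "is_arg_min (\<lambda>q. pAw x y q (u (Suc k)) + c + KL q (\<chi> i. 1 / real CARD('n)))
               (\<lambda>q. q \<in> prob_simplex) (p (Suc k))"
    by (simp only: objective)
qed

lemma v_s_closed_form:
  "k \<le> T \<Longrightarrow> v k = dual_sum k \<and> s k = (1/4) *\<^sub>R (\<Sum>j=1..k. real j *\<^sub>R w j)"
proof (induction k)
  case 0
  then show ?case
    by (simp add: v0 s0 dual_sum_def)
next
  case (Suc k)
  then have v: "v k = dual_sum k" and s: "s k = (1/4) *\<^sub>R (\<Sum>j=1..k. real j *\<^sub>R w j)"
    by simp_all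
  have "u (Suc k) = s k + (real (Suc k) / 4) *\<^sub>R w k"
    using u_Suc_eq_given_v[OF Suc.prems v] .
  then have p: "p (Suc k) = gibbs_dist x y (u (Suc k))"
    using p_Suc_eq_gibbs_dist_given_u[OF Suc.prems] s by simp
  have "v (Suc k) = v k - (real (Suc k) / risk x y (u (Suc k))) *\<^sub>R G (Suc k)"
    using v_step Suc.prems by simp
  also have "\<dots> = dual_sum (Suc k)"
  proof -
    have "GDERIV (risk x y) (u (Suc k)) :> G (Suc k)"
      using G_grad Suc.prems by simp
    then show ?thesis
      by (simp add: normalized_risk_gradient v p dual_sum_def algebra_simps)
  qed
  finally have v': "v (Suc k) = dual_sum (Suc k)" .
  have "s (Suc k) = s k + (1 / (2 * real (Suc k + 1))) *\<^sub>R dual_sum (Suc k)"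
    using s_step Suc.prems v' by simp
  also have "\<dots> = s k + (real (Suc k) / 4) *\<^sub>R w (Suc k)"
    using scaled_w_eq_dual_sum[OF Suc.prems, symmetric] by (simp add: field_simps)
  finally show ?case
    using v' s by (simp add: scaleR_add_right)
qed

lemma s_eq: "t \<le> T \<Longrightarrow> s t = (1/4) *\<^sub>R (\<Sum>j=1..t. real j *\<^sub>R w j)"
  using v_s_closed_form by simp

lemma u_Suc_eq: "Suc k \<le> T \<Longrightarrow> u (Suc k) = s k + (real (Suc k) / 4) *\<^sub>R w k"
  using v_s_closed_form u_Suc_eq_given_v by simp

lemma p_Suc_eq_gibbs_dist: "Suc k \<le> T \<Longrightarrow> p (Suc k) = gibbs_dist x y (u (Suc k))"
  using p_Suc_eq_gibbs_dist_given_u u_Suc_eq s_eq by simp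

definition potential :: "nat \<Rightarrow> real" where
  "potential t = log_partition x y (s t) + real t * (real t + 1) / 2 * (norm (w t))\<^sup>2 / 8
                 + (\<Sum>j=1..t. real j * (norm (w j))\<^sup>2) / 8"

lemma log_partition_s_Suc_le:
  assumes "Suc k \<le> T"
  defines "t \<equiv> real (Suc k)"
  shows "log_partition x y (s (Suc k)) - log_partition x y (s k)
           \<le> - (((t * (t + 1) / 2) *\<^sub>R w (Suc k) - ((t - 1) * t / 2) *\<^sub>R w k) \<bullet> w (Suc k)) / 4
              + (norm ((t / 4) *\<^sub>R (w (Suc k) - w k)))\<^sup>2 / 2"
proof -
  define a where "a = Atrans x y (p (Suc k))"
  define \<delta> where "\<delta> = (t / 4) *\<^sub>R (w (Suc k) - w k)"
  have "s (Suc k) = s k + (t / 4) *\<^sub>R w (Suc k)"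
    using s_eq[OF assms(1)] s_eq[of k] assms(1) by (simp add: t_def scaleR_add_right)
  then have s_Suc: "s (Suc k) = u (Suc k) + \<delta>"
    using u_Suc_eq[OF assms(1), folded t_def] by (simp add: \<delta>_def algebra_simps)
  have s_k: "s k = u (Suc k) + - (t / 4) *\<^sub>R w k"
    using u_Suc_eq[OF assms(1)] by (simp add: t_def)
  have "log_partition x y (s (Suc k)) \<le> log_partition x y (u (Suc k)) - a \<bullet> \<delta> + (norm \<delta>)\<^sup>2 / 2"
    unfolding s_Suc a_def p_Suc_eq_gibbs_dist[OF assms(1)]
    by (rule log_partition_le_tangent_quadratic[OF x_norm y_sign])
  moreover have "log_partition x y (u (Suc k)) - a \<bullet> (- (t / 4) *\<^sub>R w k) \<le> log_partition x y (s k)"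
    unfolding s_k a_def p_Suc_eq_gibbs_dist[OF assms(1)] by (rule log_partition_tangent_le)
  moreover have "a \<bullet> \<delta> - a \<bullet> (- (t / 4) *\<^sub>R w k)
      = ((t * (t + 1) / 2) *\<^sub>R w (Suc k) - ((t - 1) * t / 2) *\<^sub>R w k) \<bullet> w (Suc k) / 4"
  proof -
    have "a \<bullet> \<delta> - a \<bullet> (- (t / 4) *\<^sub>R w k) = (t *\<^sub>R a) \<bullet> w (Suc k) / 4"
      by (simp add: \<delta>_def inner_diff_right algebra_simps)
    moreover have "t *\<^sub>R a = (t * (t + 1) / 2) *\<^sub>R w (Suc k) - ((t - 1) * t / 2) *\<^sub>R w k"
      using scaled_w_eq_dual_sum[OF assms(1)] scaled_w_eq_dual_sum[of k] assms(1)
      by (simp add: t_def a_def dual_sum_def algebra_simps)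
    ultimately show ?thesis
      by simp
  qed
  moreover have "(norm \<delta>)\<^sup>2 = (norm ((t / 4) *\<^sub>R (w (Suc k) - w k)))\<^sup>2"
    by (simp only: \<delta>_def)
  ultimately show ?thesis
    by linarith
qed

lemma potential_Suc_le:
  assumes "Suc k \<le> T"
  shows "potential (Suc k)
           \<le> potential k + real (Suc k) * (2 - real (Suc k)) / 32 * (norm (w (Suc k) - w k))\<^sup>2"
proof -
  define t where "t = real (Suc k)"
  have "potential (Suc k) - potential k
      = log_partition x y (s (Suc k)) - log_partition x y (s k)
        + (t * (t + 1) / 2 + t) * (norm (w (Suc k)))\<^sup>2 / 8 - (t - 1) * t / 2 * (norm (w k))\<^sup>2 / 8"
    by (simp add: potential_def t_def algebra_simps add_divide_distrib)
  then show ?thesis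
    unfolding t_def[symmetric]
    using log_partition_s_Suc_le[OF assms, folded t_def] potential_increment_identity[of t "w (Suc k)" "w k"]
    by linarith
qed

lemma potential_zero: "potential 0 = ln (real CARD('n))"
  by (simp add: potential_def s0 log_partition_zero)

lemma potential_le:
  "t \<le> T \<Longrightarrow> potential t \<le> ln (real CARD('n)) + (norm (w 1))\<^sup>2 / 32"
proof (induction t)
  case 0
  then show ?case
    by (simp add: potential_zero)
next
  case (Suc k)
  show ?case
  proof (cases "k = 0")
    case True
    then show ?thesis
      using potential_Suc_le[OF Suc.prems] by (simp add: potential_zero w0)
  next
    case False
    then have "real (Suc k) * (2 - real (Suc k)) / 32 * (norm (w (Suc k) - w k))\<^sup>2 \<le> 0"
      by (intro mult_nonpos_nonneg divide_nonpos_pos mult_nonneg_nonpos) auto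
    then show ?thesis
      using potential_Suc_le[OF Suc.prems] Suc.IH Suc.prems by linarith
  qed
qed

lemma norm_w1_le_1:
  assumes "1 \<le> T"
  shows "norm (w 1) \<le> 1"
  using scaled_w_eq_dual_sum[OF assms] norm_Atrans_le_1[OF p_in_simplex[OF order_refl assms] x_norm y_sign]
  by (simp add: dual_sum_def)

end

locale separable_nag_game = nag_game x y T v s u G p w
  for x :: "'n::finite \<Rightarrow> real^'d" and y T v s u G p w +
  fixes wstar :: "real^'d" and \<gamma> :: real
  assumes wstar_norm: "norm wstar = 1"
    and margin: "\<forall>i. \<gamma> \<le> y i * (x i \<bullet> wstar)"
    and gamma_pos: "0 < \<gamma>"
    and T_pos: "1 \<le> T"
begin

lemma margin_le_inner_w:
  assumes "1 \<le> t" "t \<le> T"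
  shows "\<gamma> \<le> wstar \<bullet> w t"
proof -
  have "(\<Sum>j=1..t. real j * \<gamma>) \<le> (\<Sum>j=1..t. real j * (wstar \<bullet> Atrans x y (p j)))"
    using margin_le_inner_Atrans[OF p_in_simplex margin] assms
    by (intro sum_mono mult_left_mono) (auto simp: inner_commute)
  then have "real t * (real t + 1) / 2 * \<gamma> \<le> wstar \<bullet> dual_sum t"
    by (simp add: dual_sum_def inner_sum_right gauss_sum_from_Suc_0_real flip: sum_distrib_right)
  also have "\<dots> = real t * (real t + 1) / 2 * (wstar \<bullet> w t)"
    using scaled_w_eq_dual_sum[OF assms(2)] by (metis inner_scaleR_right)
  finally show ?thesis
    using assms(1) by (simp add: mult_le_cancel_left_pos)
qed

lemma margin_le_norm_w: "1 \<le> t \<Longrightarrow> t \<le> T \<Longrightarrow> \<gamma> \<le> norm (w t)"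
  using margin_le_inner_w norm_cauchy_schwarz[of wstar] wstar_norm by (metis mult_1 order_trans)

lemma norm_s_T_ge: "real T * (real T + 1) / 8 * \<gamma> \<le> norm (s T)"
proof -
  have "(\<Sum>j=1..T. real j * \<gamma>) \<le> (\<Sum>j=1..T. real j * (wstar \<bullet> w j))"
    using margin_le_inner_w by (intro sum_mono mult_left_mono) auto
  moreover have "(\<Sum>j=1..T. real j * \<gamma>) = real T * (real T + 1) / 2 * \<gamma>"
    by (simp add: gauss_sum_from_Suc_0_real flip: sum_distrib_right)
  moreover have "wstar \<bullet> s T = (\<Sum>j=1..T. real j * (wstar \<bullet> w j)) / 4"
    by (simp add: s_eq inner_sum_right)
  ultimately have "real T * (real T + 1) / 8 * \<gamma> \<le> wstar \<bullet> s T"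
    by simp
  also have "\<dots> \<le> norm (s T)"
    using norm_cauchy_schwarz[of wstar "s T"] wstar_norm by simp
  finally show ?thesis .
qed

lemma margin_norm_s_T_le:
  "\<gamma> * norm (s T) \<le> real T * (real T + 1) / 2 * \<gamma>\<^sup>2 / 8 + (\<Sum>j=1..T. real j * (norm (w j))\<^sup>2) / 8"
proof -
  have "norm (s T) \<le> (\<Sum>j=1..T. real j * norm (w j)) / 4"
    using norm_sum[of "\<lambda>j. real j *\<^sub>R w j" "{1..T}"] by (simp add: s_eq)
  then have "\<gamma> * norm (s T) \<le> \<gamma> * ((\<Sum>j=1..T. real j * norm (w j)) / 4)"
    by (rule mult_left_mono) (use gamma_pos in simp)
  also have "\<dots> = (\<Sum>j=1..T. real j * (\<gamma> * norm (w j))) / 4"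
    by (simp add: sum_distrib_left algebra_simps)
  also have "\<dots> \<le> (\<Sum>j=1..T. real j * ((\<gamma>\<^sup>2 + (norm (w j))\<^sup>2) / 2)) / 4"
  proof -
    have "\<gamma> * norm (w j) \<le> (\<gamma>\<^sup>2 + (norm (w j))\<^sup>2) / 2" for j
      using sum_squares_bound[of \<gamma> "norm (w j)"] by (simp add: algebra_simps)
    then show ?thesis
      by (intro divide_right_mono sum_mono mult_left_mono) auto
  qed
  also have "\<dots> = real T * (real T + 1) / 2 * \<gamma>\<^sup>2 / 8 + (\<Sum>j=1..T. real j * (norm (w j))\<^sup>2) / 8"
    by (simp add: gauss_sum_from_Suc_0_real add_divide_distrib ring_distribs sum.distrib
        flip: sum_distrib_right sum_divide_distrib)
  finally show ?thesis .
qed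

lemma neg_log_partition_s_T_ge:
  "\<gamma> * norm (s T) - (ln (real CARD('n)) + 1/32) \<le> - log_partition x y (s T)"
proof -
  have "(norm (w 1))\<^sup>2 \<le> 1"
    using norm_w1_le_1[OF T_pos] by (simp add: abs_square_le_1)
  then have "potential T \<le> ln (real CARD('n)) + 1/32"
    using potential_le[OF order_refl] by linarith
  moreover have "\<gamma>\<^sup>2 \<le> (norm (w T))\<^sup>2"
    using margin_le_norm_w[OF T_pos order_refl] gamma_pos by (intro power_mono) auto
  then have "real T * (real T + 1) / 2 * \<gamma>\<^sup>2 / 8 \<le> real T * (real T + 1) / 2 * (norm (w T))\<^sup>2 / 8"
    by (intro divide_right_mono mult_left_mono) auto
  ultimately show ?thesis
    using margin_norm_s_T_le potential_def[of T] by linarith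
qed

lemma normalized_margin_ge:
  "\<gamma> - (8 * ln (real CARD('n)) + 2) / (real T * (real T + 1) * \<gamma>)
     \<le> (INF q\<in>prob_simplex. pAw x y q (s T)) / norm (s T)"
proof -
  define c where "c = ln (real CARD('n)) + 1/32"
  define D where "D = real T * (real T + 1) * \<gamma>"
  have "0 \<le> c" "0 < D"
    using T_pos gamma_pos by (simp_all add: c_def D_def)
  have "D / 8 \<le> norm (s T)"
    using norm_s_T_ge by (simp add: D_def)
  with \<open>0 < D\<close> have "0 < norm (s T)"
    by linarith
  have "\<gamma> * norm (s T) - c \<le> (INF q\<in>prob_simplex. pAw x y q (s T))"
  proof (rule cINF_greatest)
    show "prob_simplex \<noteq> {}"
      using gibbs_dist_in_simplex by blast
    show "\<gamma> * norm (s T) - c \<le> pAw x y q (s T)" if "q \<in> prob_simplex" for q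
      using neg_log_partition_le_pAw[OF that, of x y "s T"] neg_log_partition_s_T_ge
      unfolding c_def by linarith
  qed
  then have "(\<gamma> * norm (s T) - c) / norm (s T) \<le> (INF q\<in>prob_simplex. pAw x y q (s T)) / norm (s T)"
    using \<open>0 < norm (s T)\<close> by (simp add: divide_right_mono)
  moreover have "(\<gamma> * norm (s T) - c) / norm (s T) = \<gamma> - c / norm (s T)"
    using \<open>0 < norm (s T)\<close> by (simp add: field_simps)
  moreover have "c / norm (s T) \<le> c / (D / 8)"
    using \<open>0 \<le> c\<close> \<open>0 < D\<close> \<open>0 < norm (s T)\<close> \<open>D / 8 \<le> norm (s T)\<close>
    by (intro divide_left_mono) auto
  moreover have "c / (D / 8) \<le> (8 * ln (real CARD('n)) + 2) / D"
    using \<open>0 < D\<close> by (simp add: c_def field_simps)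
  ultimately show ?thesis
    unfolding D_def by linarith
qed

end

theorem theorem6:
  fixes x :: "'n::finite \<Rightarrow> real^'d" and y :: "'n \<Rightarrow> real"
    and wstar :: "real^'d" and \<gamma> :: real and T :: nat
    and v s u G :: "nat \<Rightarrow> real^'d"
    and p :: "nat \<Rightarrow> real^'n" and w :: "nat \<Rightarrow> real^'d"
  assumes x_norm: "\<forall>i. norm (x i) \<le> 1"
    and y_sign: "\<forall>i. y i \<in> {-1, 1}"
    and wstar_norm: "norm wstar = 1"
    and gamma_def: "\<gamma> = Min (range (\<lambda>i. y i * (x i \<bullet> wstar)))"
    and gamma_pos: "\<gamma> > 0"
    and T_pos: "T \<ge> 1"
    and v0: "v 0 = 0" and s0: "s 0 = 0"
    and u1: "u 1 = s 0"
    and u_step: "\<forall>t. 2 \<le> t \<and> t \<le> T \<longrightarrow> u t = s (t - 1) + (1 / (2 * real (t - 1))) *\<^sub>R v (t - 1)"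
    and G_grad: "\<forall>t. 1 \<le> t \<and> t \<le> T \<longrightarrow> GDERIV (risk x y) (u t) :> G t"
    and v_step: "\<forall>t. 1 \<le> t \<and> t \<le> T \<longrightarrow> v t = v (t - 1) - (real t / risk x y (u t)) *\<^sub>R G t"
    and s_step: "\<forall>t. 1 \<le> t \<and> t \<le> T \<longrightarrow> s t = s (t - 1) + (1 / (2 * real (t + 1))) *\<^sub>R v t"
    and w0: "w 0 = 0"
    and p_step: "\<forall>t. 1 \<le> t \<and> t \<le> T \<longrightarrow>
      is_arg_min (\<lambda>q. 1/4 * ((\<Sum>j=1..t-1. real j * gfun x y (w j) q) + real t * gfun x y (w (t - 1)) q)
                      + KL q (\<chi> i. 1 / real CARD('n)))
                 (\<lambda>q. q \<in> prob_simplex) (p t)"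
    and w_step: "\<forall>t. 1 \<le> t \<and> t \<le> T \<longrightarrow>
      is_arg_min (\<lambda>z. \<Sum>j=1..t. real j * (- gfun x y z (p j))) (\<lambda>z. True) (w t)"
  shows "s T = ((\<Sum>t=1..T. real t) / 4) *\<^sub>R
               (inverse (\<Sum>t=1..T. real t) *\<^sub>R (\<Sum>t=1..T. real t *\<^sub>R w t))
       \<and> (INF q\<in>prob_simplex. pAw x y q (s T)) / norm (s T)
           \<ge> \<gamma> - (8 * ln (real CARD('n)) + 2) / (real T * (real T + 1) * \<gamma>)"
proof -
  have margin: "\<forall>i. \<gamma> \<le> y i * (x i \<bullet> wstar)"
    unfolding gamma_def by simp
  interpret separable_nag_game x y T v s u G p w wstar \<gamma>
    by unfold_locales (use assms margin in auto)
  have "0 < (\<Sum>t=1..T. real t)"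
    using T_pos by (simp add: gauss_sum_from_Suc_0_real)
  then show ?thesis
    using s_eq[OF order_refl] normalized_margin_ge by simp
qed

end
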